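(* Let $G$ be a finite group and $\mathcal{A}$ a finite subgroup of $\mathbb{C}^\times$. Let $M$ be a square matrix with entries in $\mathcal{A}$ whose rows and columns are labelled by the elements of $G$ in a fixed ordering. Then $M$ is cocyclic over $G$ if and only if there exist a normalised 2-cocycle $\psi\colon G\times G\to\mathcal{A}$ and a matrix $\mathcal{A}$-equivalent to $M$ lying in the centraliser algebra $\mathrm{C}(R)=\{X : XR(\gamma)=R(\gamma)X\ \forall\gamma\in\Gamma\}$, where $\Gamma=(G,\mathcal{A},\psi)$ and $R$ is the monomial representation $R(a,g)=a\left[\psi(x,g)\delta^{xg}_{y}\right]_{x,y\in G}$ of $\Gamma$.
   Context: A normalised 2-cocycle is a function $\psi\colon G\times G\to\mathcal{A}$ with $\psi(g,1)=\psi(1,g)=1$ and $\psi(g,h)\psi(gh,k)=\psi(g,hk)\psi(h,k)$ for all $g,h,k$. The extension $\Gamma=(G,\mathcal{A},\psi)$ is the group on $\mathcal{A}\times G$ with multiplication $(a,g)(b,h)=(ab\,\psi(g,h),gh)$. A matrix is strictly cocyclic over $G$ if it equals $[\psi(x,y)\phi(xy)]_{x,y\in G}$ for some normalised 2-cocycle $\psi\colon G\times G\to\mathcal{A}$ and some map $\phi\colon G\to\mathcal{A}$. Two matrices $M,M'$ are $\mathcal{A}$-equivalent if $M'=PMQ^\ast$ for monomial matrices $P,Q$ with nonzero entries in $\mathcal{A}$. $M$ is cocyclic over $G$ if it is $\mathcal{A}$-equivalent to a strictly cocyclic matrix. $\delta^a_b$ is the Kronecker delta. *)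

theory Defs
  imports Complex_Main "HOL-Algebra.Group"
begin

text \<open>Square matrices with rows and columns labelled by the elements of a finite group G
  are represented as functions 'g => 'g => complex; only their values on
  carrier G x carrier G are meaningful.\<close>

type_synonym 'g gmat = "'g \<Rightarrow> 'g \<Rightarrow> complex"

definition finite_unit_subgroup :: "complex set \<Rightarrow> bool" where
  "finite_unit_subgroup A \<longleftrightarrow> finite A \<and> 1 \<in> A \<and> 0 \<notin> A \<and>
     (\<forall>a\<in>A. \<forall>b\<in>A. a * b \<in> A) \<and> (\<forall>a\<in>A. inverse a \<in> A)"

definition gmat_mult :: "('g, 'b) monoid_scheme \<Rightarrow> 'g gmat \<Rightarrow> 'g gmat \<Rightarrow> 'g gmat" where
  "gmat_mult G X Y = (\<lambda>x y. \<Sum>z\<in>carrier G. X x z * Y z y)"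

definition gmat_eq :: "('g, 'b) monoid_scheme \<Rightarrow> 'g gmat \<Rightarrow> 'g gmat \<Rightarrow> bool" where
  "gmat_eq G X Y \<longleftrightarrow> (\<forall>x\<in>carrier G. \<forall>y\<in>carrier G. X x y = Y x y)"

definition gmat_adj :: "'g gmat \<Rightarrow> 'g gmat" where
  "gmat_adj Q = (\<lambda>x y. cnj (Q y x))"

definition monomial_over :: "('g, 'b) monoid_scheme \<Rightarrow> complex set \<Rightarrow> 'g gmat \<Rightarrow> bool" where
  "monomial_over G A P \<longleftrightarrow>
     (\<forall>x\<in>carrier G. \<exists>!y. y \<in> carrier G \<and> P x y \<noteq> 0) \<and>
     (\<forall>y\<in>carrier G. \<exists>!x. x \<in> carrier G \<and> P x y \<noteq> 0) \<and>
     (\<forall>x\<in>carrier G. \<forall>y\<in>carrier G. P x y \<noteq> 0 \<longrightarrow> P x y \<in> A)"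

definition A_equiv :: "('g, 'b) monoid_scheme \<Rightarrow> complex set \<Rightarrow> 'g gmat \<Rightarrow> 'g gmat \<Rightarrow> bool" where
  "A_equiv G A M M' \<longleftrightarrow> (\<exists>P Q. monomial_over G A P \<and> monomial_over G A Q \<and>
       gmat_eq G M' (gmat_mult G (gmat_mult G P M) (gmat_adj Q)))"

definition normalised_cocycle ::
  "('g, 'b) monoid_scheme \<Rightarrow> complex set \<Rightarrow> ('g \<Rightarrow> 'g \<Rightarrow> complex) \<Rightarrow> bool" where
  "normalised_cocycle G A \<psi> \<longleftrightarrow>
     (\<forall>g\<in>carrier G. \<forall>h\<in>carrier G. \<psi> g h \<in> A) \<and>
     (\<forall>g\<in>carrier G. \<psi> g \<one>\<^bsub>G\<^esub> = 1 \<and> \<psi> \<one>\<^bsub>G\<^esub> g = 1) \<and>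
     (\<forall>g\<in>carrier G. \<forall>h\<in>carrier G. \<forall>k\<in>carrier G.
        \<psi> g h * \<psi> (g \<otimes>\<^bsub>G\<^esub> h) k = \<psi> g (h \<otimes>\<^bsub>G\<^esub> k) * \<psi> h k)"

definition strictly_cocyclic :: "('g, 'b) monoid_scheme \<Rightarrow> complex set \<Rightarrow> 'g gmat \<Rightarrow> bool" where
  "strictly_cocyclic G A M \<longleftrightarrow>
     (\<exists>\<psi> \<phi>. normalised_cocycle G A \<psi> \<and> (\<forall>g\<in>carrier G. \<phi> g \<in> A) \<and>
        gmat_eq G M (\<lambda>x y. \<psi> x y * \<phi> (x \<otimes>\<^bsub>G\<^esub> y)))"

definition cocyclic :: "('g, 'b) monoid_scheme \<Rightarrow> complex set \<Rightarrow> 'g gmat \<Rightarrow> bool" where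
  "cocyclic G A M \<longleftrightarrow> (\<exists>S. strictly_cocyclic G A S \<and> A_equiv G A M S)"

definition ext_carrier :: "('g, 'b) monoid_scheme \<Rightarrow> complex set \<Rightarrow> (complex \<times> 'g) set" where
  "ext_carrier G A = A \<times> carrier G"

definition mono_rep ::
  "('g, 'b) monoid_scheme \<Rightarrow> ('g \<Rightarrow> 'g \<Rightarrow> complex) \<Rightarrow> complex \<times> 'g \<Rightarrow> 'g gmat" where
  "mono_rep G \<psi> \<gamma> = (\<lambda>x y. fst \<gamma> * \<psi> x (snd \<gamma>) * (if x \<otimes>\<^bsub>G\<^esub> snd \<gamma> = y then 1 else 0))"

definition centraliser ::
  "('g, 'b) monoid_scheme \<Rightarrow> complex set \<Rightarrow> ('g \<Rightarrow> 'g \<Rightarrow> complex) \<Rightarrow> 'g gmat set" where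
  "centraliser G A \<psi> = {X. \<forall>\<gamma>\<in>ext_carrier G A.
      gmat_eq G (gmat_mult G X (mono_rep G \<psi> \<gamma>)) (gmat_mult G (mono_rep G \<psi> \<gamma>) X)}"

end

theory Submission
  imports Defs
begin

text \<open>Both sides describe, up to \<open>\<A>\<close>-equivalence, a matrix built from one function on \<open>G\<close>
  and the cocycle \<open>\<psi>\<close>. Commuting with \<open>R(1, g)\<close> for every \<open>g\<close> forces
  \<open>X(x, y) = \<psi>(y x\<^sup>-\<^sup>1, x) X(1, y x\<^sup>-\<^sup>1)\<close>, and every matrix of this twisted group form lies in
  \<open>C(R)\<close> by the cocycle identity. Reversing the columns by \<open>u \<mapsto> u\<^sup>-\<^sup>1\<close> and rescaling column \<open>u\<close>
  by \<open>\<psi>(u\<^sup>-\<^sup>1, u)\<close> turns a twisted group matrix into \<open>[\<psi>(x, y) \<phi>(x y)]\<close> and back, again by one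
  application of the cocycle identity. Such a column operation is multiplication by a monomial
  matrix, so it preserves \<open>\<A>\<close>-equivalence; conjugates stay in \<open>\<A>\<close> because a finite subgroup of
  \<open>\<complex>\<^sup>\<times>\<close> lies on the unit circle.\<close>

lemma finite_unit_subgroup_mult:
  "finite_unit_subgroup A \<Longrightarrow> a \<in> A \<Longrightarrow> b \<in> A \<Longrightarrow> a * b \<in> A"
  and finite_unit_subgroup_inverse:
  "finite_unit_subgroup A \<Longrightarrow> a \<in> A \<Longrightarrow> inverse a \<in> A"
  and finite_unit_subgroup_nonzero:
  "finite_unit_subgroup A \<Longrightarrow> a \<in> A \<Longrightarrow> a \<noteq> 0"
  and finite_unit_subgroup_one:
  "finite_unit_subgroup A \<Longrightarrow> 1 \<in> A"
  unfolding finite_unit_subgroup_def by auto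

lemma finite_unit_subgroup_root_of_unity:
  assumes A: "finite_unit_subgroup A" and a: "a \<in> A"
  obtains k where "k > 0" "a ^ k = 1"
proof -
  have "range (\<lambda>n::nat. a ^ n) \<subseteq> A"
  proof
    fix b assume "b \<in> range (\<lambda>n::nat. a ^ n)"
    then obtain n where "b = a ^ n" by blast
    moreover have "a ^ n \<in> A"
      by (induction n) (use A a in \<open>auto intro: finite_unit_subgroup_mult finite_unit_subgroup_one\<close>)
    ultimately show "b \<in> A" by simp
  qed
  then have "\<not> inj (\<lambda>n::nat. a ^ n)"
    using A finite_imageD finite_subset infinite_UNIV_nat
    unfolding finite_unit_subgroup_def by blast
  then obtain i j :: nat where "i < j" "a ^ i = a ^ j"
    unfolding inj_def by (metis linorder_neq_iff)
  moreover have "a ^ j = a ^ i * a ^ (j - i)"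
    using \<open>i < j\<close> by (simp flip: power_add)
  ultimately have "a ^ (j - i) = 1"
    using finite_unit_subgroup_nonzero[OF A a] by simp
  with \<open>i < j\<close> show thesis by (intro that[of "j - i"]) auto
qed

lemma finite_unit_subgroup_cnj:
  assumes A: "finite_unit_subgroup A" and a: "a \<in> A"
  shows "cnj a = inverse a"
proof -
  obtain k where k: "k > 0" "a ^ k = 1"
    using finite_unit_subgroup_root_of_unity[OF A a] .
  then have "norm a ^ k = 1 ^ k" by (simp add: norm_power[symmetric])
  then have "norm a = 1" using k(1) by (metis norm_ge_zero power_eq_imp_eq_base zero_le_one)
  then have "a * cnj a = 1" using complex_norm_square[of a] by simp
  then show ?thesis using finite_unit_subgroup_nonzero[OF A a] by (simp add: field_simps)
qed

lemma finite_unit_subgroup_cnj_in: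
  "finite_unit_subgroup A \<Longrightarrow> a \<in> A \<Longrightarrow> cnj a \<in> A"
  by (simp add: finite_unit_subgroup_cnj finite_unit_subgroup_inverse)

lemma monomial_over_row:
  assumes "monomial_over G A P" "x \<in> carrier G"
  obtains t where "t \<in> carrier G" "P x t \<in> A" "\<And>s. s \<in> carrier G \<Longrightarrow> s \<noteq> t \<Longrightarrow> P x s = 0"
  using assms unfolding monomial_over_def by metis

lemma gmat_mult_monomial_row:
  assumes "finite (carrier G)" "t \<in> carrier G" "\<And>s. s \<in> carrier G \<Longrightarrow> s \<noteq> t \<Longrightarrow> P x s = 0"
  shows "gmat_mult G P N x z = P x t * N t z"
proof -
  have "gmat_mult G P N x z = (\<Sum>s\<in>{t}. P x s * N s z)"
    unfolding gmat_mult_def using assms by (intro sum.mono_neutral_right) auto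
  then show ?thesis by simp
qed

lemma A_equiv_entries:
  assumes fin: "finite (carrier G)" and A: "finite_unit_subgroup A"
    and MX: "A_equiv G A M X" and MA: "\<forall>x\<in>carrier G. \<forall>y\<in>carrier G. M x y \<in> A"
    and x: "x \<in> carrier G" and y: "y \<in> carrier G"
  shows "X x y \<in> A"
proof -
  obtain P Q where P: "monomial_over G A P" and Q: "monomial_over G A Q"
    and X: "gmat_eq G X (gmat_mult G (gmat_mult G P M) (gmat_adj Q))"
    using MX unfolding A_equiv_def by blast
  obtain t where t: "t \<in> carrier G" "P x t \<in> A" "\<And>s. s \<in> carrier G \<Longrightarrow> s \<noteq> t \<Longrightarrow> P x s = 0"
    using monomial_over_row[OF P x] by blast
  obtain u where u: "u \<in> carrier G" "Q y u \<in> A" "\<And>s. s \<in> carrier G \<Longrightarrow> s \<noteq> u \<Longrightarrow> Q y s = 0"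
    using monomial_over_row[OF Q y] by blast
  have "X x y = gmat_mult G (gmat_mult G P M) (gmat_adj Q) x y"
    using X x y unfolding gmat_eq_def by blast
  also have "\<dots> = (\<Sum>s\<in>carrier G. P x t * M t s * cnj (Q y s))"
    by (simp add: gmat_mult_def[of G "gmat_mult G P M"] gmat_adj_def
        gmat_mult_monomial_row[of G t P x, OF fin t(1) t(3)])
  also have "\<dots> = (\<Sum>s\<in>{u}. P x t * M t s * cnj (Q y s))"
    using fin u by (intro sum.mono_neutral_right) auto
  finally have "X x y = P x t * M t u * cnj (Q y u)" by simp
  then show ?thesis
    using t u MA by (simp add: finite_unit_subgroup_mult[OF A] finite_unit_subgroup_cnj_in[OF A])
qed

lemma monomial_over_permute_rows:
  assumes A: "finite_unit_subgroup A" and Q: "monomial_over G A Q"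
    and \<sigma>: "bij_betw \<sigma> (carrier G) (carrier G)" and d: "\<forall>u\<in>carrier G. d u \<in> A"
  shows "monomial_over G A (\<lambda>u z. Q (\<sigma> u) z * d u)"
  unfolding monomial_over_def
proof (intro conjI ballI impI)
  have d0: "d u \<noteq> 0" if "u \<in> carrier G" for u
    using d that finite_unit_subgroup_nonzero[OF A] by simp
  have \<sigma>_in: "\<sigma> u \<in> carrier G" if "u \<in> carrier G" for u
    using \<sigma> that bij_betwE by blast
  {
    fix u assume "u \<in> carrier G"
    then have "\<exists>!z. z \<in> carrier G \<and> Q (\<sigma> u) z \<noteq> 0"
      using Q \<sigma>_in unfolding monomial_over_def by blast
    then show "\<exists>!z. z \<in> carrier G \<and> Q (\<sigma> u) z * d u \<noteq> 0"
      using d0[OF \<open>u \<in> carrier G\<close>] by simp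
  next
    fix z assume "z \<in> carrier G"
    then obtain v where v: "v \<in> carrier G" "Q v z \<noteq> 0"
      and v_unique: "\<And>w. w \<in> carrier G \<Longrightarrow> Q w z \<noteq> 0 \<Longrightarrow> w = v"
      using Q unfolding monomial_over_def by metis
    obtain u where u: "u \<in> carrier G" "\<sigma> u = v"
      using \<sigma> v(1) by (metis bij_betw_iff_bijections)
    show "\<exists>!u. u \<in> carrier G \<and> Q (\<sigma> u) z * d u \<noteq> 0"
    proof (rule ex1I[of _ u])
      show "u \<in> carrier G \<and> Q (\<sigma> u) z * d u \<noteq> 0"
        using u v d0 by simp
    next
      fix w assume "w \<in> carrier G \<and> Q (\<sigma> w) z * d w \<noteq> 0"
      then have "w \<in> carrier G" "\<sigma> w = \<sigma> u"
        using v_unique \<sigma>_in u(2) by auto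
      then show "w = u"
        using u(1) bij_betw_imp_inj_on[OF \<sigma>] by (simp add: inj_on_eq_iff)
    qed
  next
    fix u z assume "u \<in> carrier G" "z \<in> carrier G" "Q (\<sigma> u) z * d u \<noteq> 0"
    then show "Q (\<sigma> u) z * d u \<in> A"
      using Q \<sigma>_in d finite_unit_subgroup_mult[OF A] unfolding monomial_over_def by simp
  }
qed

text \<open>\<open>Y\<close> is \<open>X\<close> times a monomial matrix \<open>D\<close>, and \<open>Q\<^sup>* D = (D\<^sup>* Q)\<^sup>*\<close> with \<open>D\<^sup>* Q\<close> monomial.\<close>
lemma A_equiv_permute_columns:
  assumes A: "finite_unit_subgroup A" and MX: "A_equiv G A M X"
    and \<sigma>: "bij_betw \<sigma> (carrier G) (carrier G)" and c: "\<forall>u\<in>carrier G. c u \<in> A"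
    and Y: "\<forall>x\<in>carrier G. \<forall>u\<in>carrier G. Y x u = c u * X x (\<sigma> u)"
  shows "A_equiv G A M Y"
proof -
  obtain P Q where P: "monomial_over G A P" and Q: "monomial_over G A Q"
    and X: "gmat_eq G X (gmat_mult G (gmat_mult G P M) (gmat_adj Q))"
    using MX unfolding A_equiv_def by blast
  define Q' where "Q' = (\<lambda>u z. Q (\<sigma> u) z * cnj (c u))"
  have "monomial_over G A Q'"
    unfolding Q'_def using A Q \<sigma>
    by (rule monomial_over_permute_rows) (use c finite_unit_subgroup_cnj_in[OF A] in blast)
  moreover have "gmat_eq G Y (gmat_mult G (gmat_mult G P M) (gmat_adj Q'))"
    unfolding gmat_eq_def
  proof (intro ballI)
    fix x u assume "x \<in> carrier G" "u \<in> carrier G"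
    then have "Y x u = c u * gmat_mult G (gmat_mult G P M) (gmat_adj Q) x (\<sigma> u)"
      using X Y \<sigma> bij_betwE unfolding gmat_eq_def by metis
    also have "\<dots> = gmat_mult G (gmat_mult G P M) (gmat_adj Q') x u"
      unfolding gmat_mult_def[of G "gmat_mult G P M"] gmat_adj_def Q'_def
      by (simp add: sum_distrib_left mult_ac)
    finally show "Y x u = gmat_mult G (gmat_mult G P M) (gmat_adj Q') x u" .
  qed
  ultimately show ?thesis
    using P unfolding A_equiv_def by blast
qed

lemma normalised_cocycle_in:
  "normalised_cocycle G A \<psi> \<Longrightarrow> g \<in> carrier G \<Longrightarrow> h \<in> carrier G \<Longrightarrow> \<psi> g h \<in> A"
  and normalised_cocycle_one_left:
  "normalised_cocycle G A \<psi> \<Longrightarrow> g \<in> carrier G \<Longrightarrow> \<psi> \<one>\<^bsub>G\<^esub> g = 1"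
  and normalised_cocycle_assoc:
  "normalised_cocycle G A \<psi> \<Longrightarrow> g \<in> carrier G \<Longrightarrow> h \<in> carrier G \<Longrightarrow> k \<in> carrier G \<Longrightarrow>
     \<psi> g h * \<psi> (g \<otimes>\<^bsub>G\<^esub> h) k = \<psi> g (h \<otimes>\<^bsub>G\<^esub> k) * \<psi> h k"
  unfolding normalised_cocycle_def by blast+

definition cocyclic_matrix ::
  "('g, 'b) monoid_scheme \<Rightarrow> ('g \<Rightarrow> 'g \<Rightarrow> complex) \<Rightarrow> ('g \<Rightarrow> complex) \<Rightarrow> 'g gmat" where
  "cocyclic_matrix G \<psi> \<phi> = (\<lambda>x y. \<psi> x y * \<phi> (x \<otimes>\<^bsub>G\<^esub> y))"

definition twisted_group_matrix ::
  "('g, 'b) monoid_scheme \<Rightarrow> ('g \<Rightarrow> 'g \<Rightarrow> complex) \<Rightarrow> ('g \<Rightarrow> complex) \<Rightarrow> 'g gmat" where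
  "twisted_group_matrix G \<psi> F =
     (\<lambda>x y. \<psi> (y \<otimes>\<^bsub>G\<^esub> inv\<^bsub>G\<^esub> x) x * F (y \<otimes>\<^bsub>G\<^esub> inv\<^bsub>G\<^esub> x))"

lemma strictly_cocyclic_cocyclic_matrix:
  "normalised_cocycle G A \<psi> \<Longrightarrow> \<forall>g\<in>carrier G. \<phi> g \<in> A \<Longrightarrow>
     strictly_cocyclic G A (cocyclic_matrix G \<psi> \<phi>)"
  unfolding strictly_cocyclic_def cocyclic_matrix_def gmat_eq_def by blast

lemma (in group) inv_bij_betw_carrier: "bij_betw (m_inv G) (carrier G) (carrier G)"
  by (rule bij_betwI[where g = "m_inv G"]) auto

locale finite_group = group G for G (structure) +
  assumes finite_carrier: "finite (carrier G)"
begin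

lemma gmat_mult_mono_rep_right:
  assumes "x \<in> carrier G" "y \<in> carrier G" "g \<in> carrier G"
  shows "gmat_mult G X (mono_rep G \<psi> (a, g)) x y = X x (y \<otimes> inv g) * (a * \<psi> (y \<otimes> inv g) g)"
proof -
  have "gmat_mult G X (mono_rep G \<psi> (a, g)) x y
      = (\<Sum>z\<in>carrier G. if z = y \<otimes> inv g then X x z * (a * \<psi> z g) else 0)"
    unfolding gmat_mult_def mono_rep_def
    using assms by (intro sum.cong) (auto simp: inv_solve_right)
  then show ?thesis
    using finite_carrier assms by simp
qed

lemma gmat_mult_mono_rep_left:
  assumes "x \<in> carrier G" "y \<in> carrier G" "g \<in> carrier G"
  shows "gmat_mult G (mono_rep G \<psi> (a, g)) X x y = a * \<psi> x g * X (x \<otimes> g) y"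
proof -
  have "gmat_mult G (mono_rep G \<psi> (a, g)) X x y
      = (\<Sum>z\<in>carrier G. if z = x \<otimes> g then a * \<psi> x g * X z y else 0)"
    unfolding gmat_mult_def mono_rep_def by (intro sum.cong) auto
  then show ?thesis
    using finite_carrier assms by simp
qed

lemma twisted_group_matrix_in_centraliser:
  assumes \<psi>: "normalised_cocycle G A \<psi>"
  shows "twisted_group_matrix G \<psi> F \<in> centraliser G A \<psi>"
  unfolding centraliser_def ext_carrier_def gmat_eq_def
proof (intro CollectI ballI)
  fix \<gamma> x y assume "\<gamma> \<in> A \<times> carrier G" and x: "x \<in> carrier G" and y: "y \<in> carrier G"
  then obtain a g where \<gamma>: "\<gamma> = (a, g)" and g: "g \<in> carrier G" by blast
  define h where "h = y \<otimes> inv g \<otimes> inv x"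
  have h: "h \<in> carrier G" "h \<otimes> x = y \<otimes> inv g" "y \<otimes> inv (x \<otimes> g) = h"
    using x y g by (simp_all add: h_def m_assoc inv_mult_group)
  have "\<psi> h x * \<psi> (y \<otimes> inv g) g = \<psi> h (x \<otimes> g) * \<psi> x g"
    using normalised_cocycle_assoc[OF \<psi> h(1) x g] by (simp add: h(2))
  then show "gmat_mult G (twisted_group_matrix G \<psi> F) (mono_rep G \<psi> \<gamma>) x y
      = gmat_mult G (mono_rep G \<psi> \<gamma>) (twisted_group_matrix G \<psi> F) x y"
    using x y g
    by (simp add: \<gamma> gmat_mult_mono_rep_right gmat_mult_mono_rep_left twisted_group_matrix_def
        h(3) mult_ac flip: h_def)
qed

text \<open>Commuting with \<open>R(1, x)\<close> moves the entry at \<open>(\<one>, y x\<^sup>-\<^sup>1)\<close> to \<open>(x, y)\<close>, so a matrix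
  in the centraliser is determined by its first row.\<close>
lemma centraliser_twisted_group_matrix:
  assumes \<psi>: "normalised_cocycle G A \<psi>" and A: "1 \<in> A" and X: "X \<in> centraliser G A \<psi>"
  shows "gmat_eq G X (twisted_group_matrix G \<psi> (X \<one>))"
  unfolding gmat_eq_def
proof (intro ballI)
  fix x y assume x: "x \<in> carrier G" and y: "y \<in> carrier G"
  have "gmat_mult G X (mono_rep G \<psi> (1, x)) \<one> y = gmat_mult G (mono_rep G \<psi> (1, x)) X \<one> y"
    using X A x y unfolding centraliser_def ext_carrier_def gmat_eq_def by blast
  then show "X x y = twisted_group_matrix G \<psi> (X \<one>) x y"
    using x y normalised_cocycle_one_left[OF \<psi> x]
    by (simp add: gmat_mult_mono_rep_right gmat_mult_mono_rep_left twisted_group_matrix_def mult_ac)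
qed

lemma cocyclic_matrix_inv_column:
  assumes \<psi>: "normalised_cocycle G A \<psi>" and "x \<in> carrier G" "u \<in> carrier G"
  shows "cocyclic_matrix G \<psi> (\<lambda>t. \<psi> (inv t) t * F (inv t)) x u
    = \<psi> (inv u) u * twisted_group_matrix G \<psi> F x (inv u)"
proof -
  have "\<psi> (inv (x \<otimes> u)) x * \<psi> (inv u) u = \<psi> (inv (x \<otimes> u)) (x \<otimes> u) * \<psi> x u"
    using normalised_cocycle_assoc[OF \<psi>, of "inv (x \<otimes> u)" x u] assms
    by (simp add: inv_mult_group m_assoc)
  then show ?thesis
    using assms by (simp add: cocyclic_matrix_def twisted_group_matrix_def inv_mult_group mult_ac)
qed

lemma twisted_group_matrix_inv_column:
  assumes \<psi>: "normalised_cocycle G A \<psi>" and A0: "0 \<notin> A" and x: "x \<in> carrier G" and w: "w \<in> carrier G"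
  shows "twisted_group_matrix G \<psi> (\<lambda>s. inverse (\<psi> s (inv s)) * \<phi> (inv s)) x w
    = inverse (\<psi> w (inv w)) * cocyclic_matrix G \<psi> \<phi> x (inv w)"
proof -
  define s where "s = w \<otimes> inv x"
  have s: "s \<in> carrier G" "s \<otimes> x = w" "inv s = x \<otimes> inv w"
    using x w by (simp_all add: s_def m_assoc inv_mult_group)
  have "\<psi> s x * \<psi> w (inv w) = \<psi> s (inv s) * \<psi> x (inv w)"
    using normalised_cocycle_assoc[OF \<psi> s(1) x, of "inv w"] w by (simp add: s(2,3))
  moreover have "\<psi> s (inv s) \<noteq> 0" "\<psi> w (inv w) \<noteq> 0"
    using normalised_cocycle_in[OF \<psi>] A0 s(1) w by (metis inv_closed)+
  ultimately show ?thesis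
    by (simp add: cocyclic_matrix_def twisted_group_matrix_def flip: s_def s(3))
      (simp add: field_simps)
qed

lemma cocyclic_imp_A_equiv_centraliser:
  assumes A: "finite_unit_subgroup A" and "cocyclic G A M"
  shows "\<exists>\<psi> X. normalised_cocycle G A \<psi> \<and> A_equiv G A M X \<and> X \<in> centraliser G A \<psi>"
proof -
  obtain S \<psi> \<phi> where MS: "A_equiv G A M S" and \<psi>: "normalised_cocycle G A \<psi>"
    and S: "gmat_eq G S (cocyclic_matrix G \<psi> \<phi>)"
    using \<open>cocyclic G A M\<close> unfolding cocyclic_def strictly_cocyclic_def cocyclic_matrix_def by blast
  have A0: "0 \<notin> A"
    using finite_unit_subgroup_nonzero[OF A] by blast
  have "A_equiv G A M (twisted_group_matrix G \<psi> (\<lambda>s. inverse (\<psi> s (inv s)) * \<phi> (inv s)))"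
    using A MS inv_bij_betw_carrier
  proof (rule A_equiv_permute_columns[where c = "\<lambda>w. inverse (\<psi> w (inv w))"])
    show "\<forall>w\<in>carrier G. inverse (\<psi> w (inv w)) \<in> A"
      using normalised_cocycle_in[OF \<psi>] finite_unit_subgroup_inverse[OF A] by simp
    show "\<forall>x\<in>carrier G. \<forall>w\<in>carrier G.
        twisted_group_matrix G \<psi> (\<lambda>s. inverse (\<psi> s (inv s)) * \<phi> (inv s)) x w
          = inverse (\<psi> w (inv w)) * S x (inv w)"
      using S twisted_group_matrix_inv_column[OF \<psi> A0] unfolding gmat_eq_def by simp
  qed
  then show ?thesis
    using \<psi> twisted_group_matrix_in_centraliser by blast
qed

lemma A_equiv_centraliser_imp_cocyclic:
  assumes A: "finite_unit_subgroup A" and M: "\<forall>x\<in>carrier G. \<forall>y\<in>carrier G. M x y \<in> A"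
    and \<psi>: "normalised_cocycle G A \<psi>" and MX: "A_equiv G A M X" and X: "X \<in> centraliser G A \<psi>"
  shows "cocyclic G A M"
proof -
  define \<phi> where "\<phi> t = \<psi> (inv t) t * X \<one> (inv t)" for t
  have "A_equiv G A M (cocyclic_matrix G \<psi> \<phi>)"
    using A MX inv_bij_betw_carrier
  proof (rule A_equiv_permute_columns[where c = "\<lambda>u. \<psi> (inv u) u"])
    show "\<forall>u\<in>carrier G. \<psi> (inv u) u \<in> A"
      using normalised_cocycle_in[OF \<psi>] by simp
    show "\<forall>x\<in>carrier G. \<forall>u\<in>carrier G. cocyclic_matrix G \<psi> \<phi> x u = \<psi> (inv u) u * X x (inv u)"
      using centraliser_twisted_group_matrix[OF \<psi> finite_unit_subgroup_one[OF A] X]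
        cocyclic_matrix_inv_column[OF \<psi>]
      unfolding gmat_eq_def \<phi>_def by simp
  qed
  moreover have "\<forall>t\<in>carrier G. \<phi> t \<in> A"
    using normalised_cocycle_in[OF \<psi>] A_equiv_entries[OF finite_carrier A MX M]
    by (simp add: \<phi>_def finite_unit_subgroup_mult[OF A])
  ultimately show ?thesis
    using strictly_cocyclic_cocyclic_matrix[OF \<psi>] unfolding cocyclic_def by blast
qed

end

theorem theorem4p4:
  fixes G :: "('g, 'b) monoid_scheme" and A :: "complex set" and M :: "'g gmat"
  assumes "group G" and "finite (carrier G)"
    and "finite_unit_subgroup A"
    and "\<forall>x\<in>carrier G. \<forall>y\<in>carrier G. M x y \<in> A"
  shows "cocyclic G A M \<longleftrightarrow>
    (\<exists>\<psi> X. normalised_cocycle G A \<psi> \<and> A_equiv G A M X \<and> X \<in> centraliser G A \<psi>)"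
proof -
  interpret finite_group G
    using assms(1,2) by (simp add: finite_group_def finite_group_axioms_def)
  show ?thesis
    using cocyclic_imp_A_equiv_centraliser A_equiv_centraliser_imp_cocyclic assms(3,4) by blast
qed

end
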